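(* Let $d\ge 3$ and let $\mathfrak M$ be a model of $\mathsf{SpecRel}_d$. Then for all inertial observers $m,k\in\mathrm{IOb}$ and all events $e_1,e_2\in Ev_m$, $$\mathsf{time}_m(e_1,e_2)^2-\mathsf{dist}_m(e_1,e_2)^2=\mathsf{time}_k(e_1,e_2)^2-\mathsf{dist}_k(e_1,e_2)^2 .$$
   Context: Fix a natural number $d\ge 2$. Models are first-order structures $\mathfrak M=\langle U;\mathrm B,\mathrm{Ob},\mathrm{IOb},\mathrm{Ph},\mathrm Q,+,\cdot,\le,\mathrm W\rangle$, where $\mathrm B,\mathrm{Ob},\mathrm{IOb},\mathrm{Ph},\mathrm Q$ are unary relations (subsets of $U$: bodies, observers, inertial observers, photons, quantities), $+,\cdot$ are binary function symbols, $\le$ a binary relation symbol, and $\mathrm W$ a $(2+d)$-ary relation; $\mathrm W(m,b,\vec p)$ is read "observer $m$ coordinatizes body $b$ at coordinate point $\vec p\in\mathrm Q^d$". For $\vec p=\langle p_1,\dots,p_d\rangle\in\mathrm Q^d$ write $p_t:=p_1$ (time component), $\vec p_s:=\langle p_2,\dots,p_d\rangle$ (space component), $|\vec p|:=\sqrt{p_1^2+\dots+p_n^2}$ for $\vec p\in \mathrm Q^n$ (Euclidean length); $\mathrm Q^d$ carries its vector-space operations and $\vec o$ is the origin. Define $ev_m(\vec p):=\{b\in\mathrm B:\mathrm W(m,b,\vec p)\}$, $Cd_m:=\{\vec p\in\mathrm Q^d: ev_m(\vec p)\neq\emptyset\}$, $Ev_m:=\{ev_m(\vec p):\vec p\in Cd_m\}$,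 $Ev:=\bigcup_{m\in\mathrm{Ob}}Ev_m$. $Crd_m(e)$ denotes the unique $\vec p\in Cd_m$ with $ev_m(\vec p)=e$; any statement involving $Crd_m(e)$ (or the notions below built from it) tacitly asserts that such a unique $\vec p$ exists. $\mathsf{time}_m(e_1,e_2):=|Crd_m(e_1)_t-Crd_m(e_2)_t|$, $\mathsf{dist}_m(e_1,e_2):=|Crd_m(e_1)_s-Crd_m(e_2)_s|$, and $e_1\sim_m e_2$ (simultaneous for $m$) iff $Crd_m(e_1)_t=Crd_m(e_2)_t$. $\mathsf{SpecRel}_d$ consists of the axioms: AxFrame: $\mathrm{Ob}\cup\mathrm{Ph}\subseteq\mathrm B$, $\mathrm{IOb}\subseteq\mathrm{Ob}$, $U=\mathrm B\cup\mathrm Q$, $\mathrm B\cap\mathrm Q=\emptyset$, $\mathrm W\subseteq\mathrm{Ob}\times\mathrm B\times\mathrm Q^d$, $+,\cdot$ are binary operations on $\mathrm Q$ and $\le$ is a binary relation on $\mathrm Q$. AxEOF: $\langle\mathrm Q;+,\cdot,\le\rangle$ is a Euclidean ordered field (a linearly ordered field in which every positive element has a square root). AxSelf$^-$: $\forall m\in\mathrm{Ob}\ \forall\vec p\in Cd_m\ (m\in ev_m(\vec p)\iff \vec p_s=\vec o)$. AxPh$_0$: $\forall m\in\mathrm{IOb}\ \forall\vec p,\vec q\in\mathrm Q^d\ (|\vec p_s-\vec q_s|=|p_t-q_t|\iff \mathrm{Ph}\cap ev_m(\vec p)\cap ev_m(\vec q)\neq\emptyset)$. AxEv: $\forall m,k\in\mathrm{IOb}\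 Ev_m=Ev_k$. AxSimDist: $\forall m,k\in\mathrm{IOb}\ \forall e_1,e_2\in Ev_m\ (e_1\sim_m e_2\wedge e_1\sim_k e_2\Rightarrow \mathsf{dist}_m(e_1,e_2)=\mathsf{dist}_k(e_1,e_2))$. *)

theory Defs
  imports Main
begin

text \<open>Two-sorted rendering of the models of SpecRel_d: bodies are the elements of
  type 'b (so B = UNIV), quantities are the elements of a linearly ordered field 'q
  (so Q = UNIV).  Coordinate points in Q^d are lists of length d; the first entry is
  the time component, the tail is the space component.\<close>

definition ev :: "('b \<Rightarrow> 'b \<Rightarrow> 'q list \<Rightarrow> bool) \<Rightarrow> 'b \<Rightarrow> 'q list \<Rightarrow> 'b set" where
  "ev W m p = {b. W m b p}"

definition Cd :: "nat \<Rightarrow> ('b \<Rightarrow> 'b \<Rightarrow> 'q list \<Rightarrow> bool) \<Rightarrow> 'b \<Rightarrow> 'q list set" where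
  "Cd d W m = {p. length p = d \<and> ev W m p \<noteq> {}}"

definition Evm :: "nat \<Rightarrow> ('b \<Rightarrow> 'b \<Rightarrow> 'q list \<Rightarrow> bool) \<Rightarrow> 'b \<Rightarrow> 'b set set" where
  "Evm d W m = ev W m ` Cd d W m"

definition EvAll :: "nat \<Rightarrow> 'b set \<Rightarrow> ('b \<Rightarrow> 'b \<Rightarrow> 'q list \<Rightarrow> bool) \<Rightarrow> 'b set set" where
  "EvAll d Ob W = (\<Union>m\<in>Ob. Evm d W m)"

definition has_crd :: "nat \<Rightarrow> ('b \<Rightarrow> 'b \<Rightarrow> 'q list \<Rightarrow> bool) \<Rightarrow> 'b \<Rightarrow> 'b set \<Rightarrow> bool" where
  "has_crd d W m e = (\<exists>!p. p \<in> Cd d W m \<and> ev W m p = e)"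

definition Crd :: "nat \<Rightarrow> ('b \<Rightarrow> 'b \<Rightarrow> 'q list \<Rightarrow> bool) \<Rightarrow> 'b \<Rightarrow> 'b set \<Rightarrow> 'q list" where
  "Crd d W m e = (THE p. p \<in> Cd d W m \<and> ev W m p = e)"

definition vsub :: "'q::ab_group_add list \<Rightarrow> 'q list \<Rightarrow> 'q list" where
  "vsub p q = map2 (-) p q"

definition esqrt :: "'q::linordered_field \<Rightarrow> 'q" where
  "esqrt x = (THE y. 0 \<le> y \<and> y * y = x)"

definition elen :: "'q::linordered_field list \<Rightarrow> 'q" where
  "elen v = esqrt (sum_list (map (\<lambda>x. x ^ 2) v))"

definition time :: "nat \<Rightarrow> ('b \<Rightarrow> 'b \<Rightarrow> 'q::linordered_field list \<Rightarrow> bool) \<Rightarrow> 'b \<Rightarrow> 'b set \<Rightarrow> 'b set \<Rightarrow> 'q" where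
  "time d W m e1 e2 = \<bar>hd (Crd d W m e1) - hd (Crd d W m e2)\<bar>"

definition dist :: "nat \<Rightarrow> ('b \<Rightarrow> 'b \<Rightarrow> 'q::linordered_field list \<Rightarrow> bool) \<Rightarrow> 'b \<Rightarrow> 'b set \<Rightarrow> 'b set \<Rightarrow> 'q" where
  "dist d W m e1 e2 = elen (vsub (tl (Crd d W m e1)) (tl (Crd d W m e2)))"

definition simul :: "nat \<Rightarrow> ('b \<Rightarrow> 'b \<Rightarrow> 'q list \<Rightarrow> bool) \<Rightarrow> 'b \<Rightarrow> 'b set \<Rightarrow> 'b set \<Rightarrow> bool" where
  "simul d W m e1 e2 = (hd (Crd d W m e1) = hd (Crd d W m e2))"

definition AxFrame :: "nat \<Rightarrow> 'b set \<Rightarrow> 'b set \<Rightarrow> ('b \<Rightarrow> 'b \<Rightarrow> 'q list \<Rightarrow> bool) \<Rightarrow> bool" where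
  "AxFrame d Ob IOb W = (IOb \<subseteq> Ob \<and> (\<forall>m b p. W m b p \<longrightarrow> m \<in> Ob \<and> length p = d))"

definition AxEOF :: "'q::linordered_field itself \<Rightarrow> bool" where
  "AxEOF _ = (\<forall>x::'q. 0 < x \<longrightarrow> (\<exists>y. y * y = x))"

definition AxSelf :: "nat \<Rightarrow> 'b set \<Rightarrow> ('b \<Rightarrow> 'b \<Rightarrow> 'q::zero list \<Rightarrow> bool) \<Rightarrow> bool" where
  "AxSelf d Ob W = (\<forall>m\<in>Ob. \<forall>p\<in>Cd d W m. (m \<in> ev W m p \<longleftrightarrow> tl p = replicate (d - 1) 0))"

definition AxPh0 :: "nat \<Rightarrow> 'b set \<Rightarrow> 'b set \<Rightarrow> ('b \<Rightarrow> 'b \<Rightarrow> 'q::linordered_field list \<Rightarrow> bool) \<Rightarrow> bool" where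
  "AxPh0 d IOb Ph W = (\<forall>m\<in>IOb. \<forall>p q. length p = d \<longrightarrow> length q = d \<longrightarrow>
      (elen (vsub (tl p) (tl q)) = \<bar>hd p - hd q\<bar> \<longleftrightarrow> Ph \<inter> ev W m p \<inter> ev W m q \<noteq> {}))"

definition AxEv :: "nat \<Rightarrow> 'b set \<Rightarrow> ('b \<Rightarrow> 'b \<Rightarrow> 'q list \<Rightarrow> bool) \<Rightarrow> bool" where
  "AxEv d IOb W = (\<forall>m\<in>IOb. \<forall>k\<in>IOb. Evm d W m = Evm d W k)"

text \<open>The tacit definedness of Crd is read as part of the premise.\<close>
definition AxSimDist :: "nat \<Rightarrow> 'b set \<Rightarrow> ('b \<Rightarrow> 'b \<Rightarrow> 'q::linordered_field list \<Rightarrow> bool) \<Rightarrow> bool" where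
  "AxSimDist d IOb W = (\<forall>m\<in>IOb. \<forall>k\<in>IOb. \<forall>e1\<in>Evm d W m. \<forall>e2\<in>Evm d W m.
      has_crd d W m e1 \<and> has_crd d W m e2 \<and> has_crd d W k e1 \<and> has_crd d W k e2 \<and>
      simul d W m e1 e2 \<and> simul d W k e1 e2 \<longrightarrow> dist d W m e1 e2 = dist d W k e1 e2)"

definition SpecRel :: "nat \<Rightarrow> 'b set \<Rightarrow> 'b set \<Rightarrow> 'b set \<Rightarrow> ('b \<Rightarrow> 'b \<Rightarrow> 'q::linordered_field list \<Rightarrow> bool) \<Rightarrow> bool" where
  "SpecRel d Ob IOb Ph W = (AxFrame d Ob IOb W \<and> AxEOF TYPE('q) \<and> AxSelf d Ob W \<and>
      AxPh0 d IOb Ph W \<and> AxEv d IOb W \<and> AxSimDist d IOb W)"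

end

theory Submission
  imports Defs "HOL-Library.Function_Algebras"
begin

text \<open>By \<open>AxEv\<close> and \<open>AxPh\<^sub>0\<close>, the worldview
  transformation sending the \<open>m\<close>-coordinates of an event to its \<open>k\<close>-coordinates is a bijection
  of \<open>Q\<^sup>d\<close> that preserves lightlike separation in both directions. For \<open>d \<ge> 3\<close> such a map
  is affine up to a field endomorphism (an Alexandrov--Zeeman type argument): a parallelogram
  argument along non-orthogonal light lines makes its linear part \<open>h\<close> additive, comparing how
  \<open>h\<close> rescales different light lines gives \<open>h (c x) = \<phi> c \<cdot> h x\<close> for a field endomorphism
  \<open>\<phi>\<close>, and preservation of the light cone makes \<open>h\<close> conformal with some factor \<open>\<mu>\<close>.
  Finally \<open>AxSimDist\<close>, applied to a spacelike vector that is simultaneous for both observers,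
  forces \<open>\<phi> s\<^sup>2 = s\<^sup>2\<close>, hence \<open>\<phi> = id\<close>, and \<open>\<mu> = 1\<close>. So the transformation preserves
  the Minkowski interval \<open>time\<^sup>2 - dist\<^sup>2\<close>.\<close>

section \<open>Minkowski space over an ordered field\<close>

text \<open>A point of \<open>Q\<^sup>d\<close> is a function \<open>nat \<Rightarrow> Q\<close> vanishing from index \<open>d\<close> on; index \<open>0\<close> is
  time.\<close>
definition spacetime :: "nat \<Rightarrow> (nat \<Rightarrow> 'q::zero) set" where
  "spacetime d = {x. \<forall>i\<ge>d. x i = 0}"

definition smul :: "'q::times \<Rightarrow> (nat \<Rightarrow> 'q) \<Rightarrow> nat \<Rightarrow> 'q" where
  "smul c x = (\<lambda>i. c * x i)"

definition unit_vec :: "nat \<Rightarrow> nat \<Rightarrow> 'q::zero_neq_one" where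
  "unit_vec i = (\<lambda>j. if j = i then 1 else 0)"

definition mink :: "nat \<Rightarrow> (nat \<Rightarrow> 'q::comm_ring) \<Rightarrow> (nat \<Rightarrow> 'q) \<Rightarrow> 'q" where
  "mink d x y = x 0 * y 0 - (\<Sum>i\<in>{1..<d}. x i * y i)"

abbreviation mquad :: "nat \<Rightarrow> (nat \<Rightarrow> 'q::comm_ring) \<Rightarrow> 'q" where
  "mquad d x \<equiv> mink d x x"

lemma smul_apply [simp]: "smul c x i = c * x i"
  by (simp add: smul_def)

lemma unit_vec_apply [simp]: "unit_vec i j = (if j = i then 1 else 0)"
  by (simp add: unit_vec_def)

lemma spacetime_zero [simp, intro]: "0 \<in> spacetime d"
  and spacetime_add [simp, intro]: "x \<in> spacetime d \<Longrightarrow> y \<in> spacetime d \<Longrightarrow> x + y \<in> spacetime d"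
  and spacetime_diff [simp, intro]: "x \<in> spacetime d \<Longrightarrow> y \<in> spacetime d \<Longrightarrow> x - y \<in> spacetime d"
  and spacetime_uminus [simp, intro]: "x \<in> spacetime d \<Longrightarrow> - x \<in> spacetime d"
  and spacetime_smul [simp, intro]: "x \<in> spacetime d \<Longrightarrow> smul c x \<in> spacetime d"
  and spacetime_unit_vec [simp, intro]: "i < d \<Longrightarrow> unit_vec i \<in> spacetime d"
  for x y :: "nat \<Rightarrow> 'q::comm_ring_1"
  by (simp_all add: spacetime_def)

lemma smul_add_right: "smul c (x + y) = smul c x + smul c y"
  and smul_diff_right: "smul c (x - y) = smul c x - smul c y"
  and smul_add_left: "smul (a + b) x = smul a x + smul b x"
  and smul_smul: "smul a (smul b x) = smul (a * b) x"
  for x y :: "nat \<Rightarrow> 'q::comm_ring_1"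
  by (simp_all add: fun_eq_iff algebra_simps)

lemma smul_one [simp]: "smul 1 x = x"
  and smul_zero_left [simp]: "smul 0 x = 0"
  and smul_zero_right [simp]: "smul c (0 :: nat \<Rightarrow> 'q) = 0"
  for x :: "nat \<Rightarrow> 'q::comm_ring_1"
  by (simp_all add: fun_eq_iff)

lemma smul_cancel:
  fixes x :: "nat \<Rightarrow> 'q::field"
  assumes "smul a x = smul b x" and "x \<noteq> 0"
  shows "a = b"
proof -
  obtain i where "x i \<noteq> 0"
    using assms(2) by (auto simp: fun_eq_iff)
  moreover have "smul a x i = smul b x i"
    using assms(1) by simp
  ultimately show ?thesis
    by simp
qed

lemma mink_commute: "mink d x y = mink d y x"
  by (simp add: mink_def mult.commute)

lemma mink_add_left: "mink d (x + y) z = mink d x z + mink d y z"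
  and mink_add_right: "mink d z (x + y) = mink d z x + mink d z y"
  and mink_diff_left: "mink d (x - y) z = mink d x z - mink d y z"
  and mink_diff_right: "mink d z (x - y) = mink d z x - mink d z y"
  and mink_uminus_left: "mink d (- x) z = - mink d x z"
  and mink_uminus_right: "mink d z (- x) = - mink d z x"
  and mink_smul_left: "mink d (smul c x) z = c * mink d x z"
  and mink_smul_right: "mink d z (smul c x) = c * mink d z x"
  for x y z :: "nat \<Rightarrow> 'q::comm_ring_1"
  by (simp_all add: mink_def algebra_simps sum.distrib sum_subtractf sum_negf sum_distrib_left)

lemma mink_zero_left [simp]: "mink d 0 y = 0"
  and mink_zero_right [simp]: "mink d y 0 = 0"
  by (simp_all add: mink_def)

lemmas mink_bilinear = mink_add_left mink_add_right mink_diff_left mink_diff_right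
  mink_uminus_left mink_uminus_right mink_smul_left mink_smul_right

lemma mink_unit_vec_right:
  fixes x :: "nat \<Rightarrow> 'q::comm_ring_1"
  shows "mink d x (unit_vec j) = (if j = 0 then x 0 else if j < d then - x j else 0)"
proof -
  have "(\<Sum>i\<in>{1..<d}. x i * unit_vec j i) = (if 1 \<le> j \<and> j < d then x j else 0)"
    by (simp add: if_distrib[of "\<lambda>v. x _ * v"] cong: if_cong)
  then show ?thesis
    by (auto simp: mink_def)
qed

lemma mink_unit_vec_left:
  fixes x :: "nat \<Rightarrow> 'q::comm_ring_1"
  shows "mink d (unit_vec j) x = (if j = 0 then x 0 else if j < d then - x j else 0)"
  using mink_unit_vec_right mink_commute by metis

lemma mquad_add: "mquad d (x + y) = mquad d x + 2 * mink d x y + mquad d y"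
  and mquad_diff: "mquad d (x - y) = mquad d x - 2 * mink d x y + mquad d y"
  for x y :: "nat \<Rightarrow> 'q::comm_ring_1"
  by (simp_all add: mink_bilinear mink_commute[of d y x] algebra_simps)

lemma mquad_smul: "mquad d (smul c x) = c * c * mquad d x"
  for x :: "nat \<Rightarrow> 'q::comm_ring_1"
  by (simp add: mink_bilinear)

lemma mquad_add_smul_null:
  fixes w a b :: "nat \<Rightarrow> 'q::comm_ring_1"
  assumes "mquad d w = 0" "mquad d a = 0" "mquad d b = 0"
  shows "mquad d (w + smul t a - smul r b)
    = 2 * t * mink d w a - 2 * r * (mink d w b + t * mink d a b)"
  using assms by (simp add: mink_bilinear mink_commute[of d a w] mink_commute[of d b w]
      mink_commute[of d b a] algebra_simps)

lemma mquad_uminus [simp]: "mquad d (- x) = mquad d x"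
  for x :: "nat \<Rightarrow> 'q::comm_ring_1"
  by (simp add: mink_bilinear)

lemma mquad_minus_commute: "mquad d (x - y) = mquad d (y - x)"
  for x y :: "nat \<Rightarrow> 'q::comm_ring_1"
  by (simp add: mquad_diff mink_commute[of d x y])

lemma time_zero_mquad_eq_0:
  fixes x :: "nat \<Rightarrow> 'q::linordered_field"
  assumes "x \<in> spacetime d" and "x 0 = 0" and "mquad d x = 0"
  shows "x = 0"
proof -
  have "(\<Sum>i\<in>{1..<d}. x i * x i) = 0"
    using assms(2,3) by (simp add: mink_def)
  then have "x i = 0" if "1 \<le> i" "i < d" for i
    using that by (subst (asm) sum_nonneg_eq_0_iff) auto
  with assms(1,2) show ?thesis
    by (auto simp: spacetime_def fun_eq_iff Suc_le_eq) (metis leI not_gr0)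
qed

lemma time_zero_mquad_neg:
  fixes x :: "nat \<Rightarrow> 'q::linordered_field"
  assumes "x \<in> spacetime d" and "x 0 = 0" and "x \<noteq> 0"
  shows "mquad d x < 0"
proof -
  have "mquad d x = - (\<Sum>i\<in>{1..<d}. x i * x i)"
    using assms(2) by (simp add: mink_def)
  also have "\<dots> \<le> 0"
    by (simp add: sum_nonneg)
  finally show ?thesis
    using time_zero_mquad_eq_0[OF assms(1,2)] assms(3) by fastforce
qed

lemma null_time_nonzero:
  fixes n :: "nat \<Rightarrow> 'q::linordered_field"
  assumes "n \<in> spacetime d" and "mquad d n = 0" and "n \<noteq> 0"
  shows "n 0 \<noteq> 0"
  using time_zero_mquad_eq_0 assms by blast

lemma null_orthogonal_parallel:
  fixes n m :: "nat \<Rightarrow> 'q::linordered_field"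
  assumes "n \<in> spacetime d" "m \<in> spacetime d" "mquad d n = 0" "mquad d m = 0" "n \<noteq> 0"
    and "mink d n m = 0"
  shows "m = smul (m 0 / n 0) n"
proof -
  have "n 0 \<noteq> 0"
    using null_time_nonzero assms by blast
  moreover have "mquad d (m - smul (m 0 / n 0) n) = 0"
    using assms(3,4,6) by (simp add: mink_bilinear mink_commute[of d m n])
  ultimately have "m - smul (m 0 / n 0) n = 0"
    using assms(1,2) by (intro time_zero_mquad_eq_0) auto
  then show ?thesis
    by simp
qed

definition null_pos :: "nat \<Rightarrow> nat \<Rightarrow> 'q::comm_ring_1" where
  "null_pos i = unit_vec 0 + unit_vec i"

definition null_neg :: "nat \<Rightarrow> nat \<Rightarrow> 'q::comm_ring_1" where
  "null_neg i = unit_vec 0 - unit_vec i"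

context
  fixes i d :: nat
  assumes i: "1 \<le> i" "i < d"
begin

lemma null_pos_spacetime [simp]: "null_pos i \<in> spacetime d"
  and null_neg_spacetime [simp]: "null_neg i \<in> spacetime d"
  using i by (simp_all add: null_pos_def null_neg_def)

lemma mink_null_pos: "mink d x (null_pos i) = x 0 - x i"
  and mink_null_neg: "mink d x (null_neg i) = x 0 + x i"
  for x :: "nat \<Rightarrow> 'q::comm_ring_1"
  using i by (simp_all add: null_pos_def null_neg_def mink_bilinear mink_unit_vec_right)

lemma mquad_null_pos [simp]: "mquad d (null_pos i :: nat \<Rightarrow> 'q::comm_ring_1) = 0"
  and mquad_null_neg [simp]: "mquad d (null_neg i :: nat \<Rightarrow> 'q::comm_ring_1) = 0"
  using i by (simp_all add: mink_null_pos mink_null_neg) (simp_all add: null_pos_def null_neg_def)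

end

lemma null_pos_nonzero [simp]: "null_pos i \<noteq> (0 :: nat \<Rightarrow> 'q::linordered_field)"
  by (auto simp: null_pos_def fun_eq_iff dest: spec[of _ 0])

lemma null_neg_nonzero [simp]: "i \<noteq> 0 \<Longrightarrow> null_neg i \<noteq> (0 :: nat \<Rightarrow> 'q::linordered_field)"
  by (auto simp: null_neg_def fun_eq_iff dest: spec[of _ 0])

lemma eq_if_same_light_cone:
  fixes x y :: "nat \<Rightarrow> 'q::linordered_field"
  assumes "2 \<le> d" and "x \<in> spacetime d" "y \<in> spacetime d"
    and same_cone: "\<And>z. z \<in> spacetime d \<Longrightarrow> mquad d (x - z) = 0 \<longleftrightarrow> mquad d (y - z) = 0"
  shows "x = y"
proof -
  define w where "w = x - y"
  have orth: "mink d w n = 0" if "n \<in> spacetime d" "mquad d n = 0" for n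
  proof -
    have "mquad d (x - (y + n)) = 0" "mquad d (x - (y - n)) = 0"
      using same_cone[of "y + n"] same_cone[of "y - n"] assms(3) that by simp_all
    moreover have "x - (y + n) = w - n" "x - (y - n) = w + n"
      by (simp_all add: w_def algebra_simps)
    ultimately have "mquad d (w - n) = 0" "mquad d (w + n) = 0"
      by simp_all
    then show ?thesis
      using that(2) by (simp add: mquad_add mquad_diff)
  qed
  have "w i = 0 \<and> w 0 = 0" if "1 \<le> i" "i < d" for i
  proof -
    have "mink d w (null_pos i) = 0" "mink d w (null_neg i) = 0"
      using orth that by simp_all
    then have "w 0 - w i = 0" "w 0 + w i = 0"
      by (simp_all only: mink_null_pos[OF that] mink_null_neg[OF that])
    then show ?thesis
      by linarith
  qed
  moreover have "w i = 0" if "d \<le> i" for i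
    using that assms(2,3) by (simp add: w_def spacetime_def)
  ultimately have "w = 0"
    using assms(1) by (auto simp: fun_eq_iff) (metis Suc_le_eq leI not_gr0 numeral_2_eq_2)
  then show ?thesis
    by (simp add: w_def)
qed

lemma on_light_line:
  fixes a b x :: "nat \<Rightarrow> 'q::linordered_field"
  assumes "a \<in> spacetime d" "b \<in> spacetime d" "x \<in> spacetime d" "a \<noteq> b"
    and "mquad d (a - b) = 0" "mquad d (x - a) = 0" "mquad d (x - b) = 0"
  shows "\<exists>c. x = a + smul c (b - a)"
proof -
  have "mquad d (b - a) = 0"
    using assms(5) by (simp add: mquad_minus_commute)
  moreover have "mink d (b - a) (x - a) = 0"
    using assms(6,7) \<open>mquad d (b - a) = 0\<close> mquad_diff[of d "x - a" "b - a"]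
    by (simp add: mink_commute)
  ultimately have "x - a = smul ((x - a) 0 / (b - a) 0) (b - a)"
    using null_orthogonal_parallel[of "b - a" d "x - a"] assms by simp
  then show ?thesis
    by (metis add_diff_cancel_left' add_diff_eq)
qed

lemma spacetime_subsetI_basis:
  fixes G :: "(nat \<Rightarrow> 'q::comm_ring_1) set"
  assumes zero: "0 \<in> G"
    and add: "\<And>x y. x \<in> G \<Longrightarrow> y \<in> G \<Longrightarrow> x + y \<in> G"
    and basis: "\<And>i c. i < d \<Longrightarrow> smul c (unit_vec i) \<in> G"
  shows "spacetime d \<subseteq> G"
proof
  fix x :: "nat \<Rightarrow> 'q"
  assume x: "x \<in> spacetime d"
  define trunc where "trunc k = (\<lambda>i. if i < k then x i else 0)" for k
  have "trunc k \<in> G" if "k \<le> d" for k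
    using that
  proof (induction k)
    case 0
    then show ?case
      using zero by (simp add: trunc_def zero_fun_def)
  next
    case (Suc k)
    have "trunc (Suc k) = trunc k + smul (x k) (unit_vec k)"
      by (auto simp: trunc_def fun_eq_iff less_Suc_eq)
    then show ?case
      using Suc add basis[of k "x k"] by (metis Suc_leD Suc_le_lessD)
  qed
  moreover have "trunc d = x"
    using x by (auto simp: trunc_def spacetime_def fun_eq_iff)
  ultimately show "x \<in> G"
    by (metis order_refl)
qed

lemma exists_null_pos_neg_nonorthogonal:
  fixes u :: "nat \<Rightarrow> 'q::linordered_field"
  assumes "3 \<le> d" and u: "u \<in> spacetime d" "mquad d u = 0" "u \<noteq> 0"
  shows "\<exists>j. 1 \<le> j \<and> j < d \<and> mink d u (null_pos j) \<noteq> 0 \<and> mink d u (null_neg j) \<noteq> 0"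
proof (rule ccontr)
  assume none: "\<not> ?thesis"
  have u0: "u 0 \<noteq> 0"
    using null_time_nonzero u by blast
  have sq: "u i * u i = u 0 * u 0" if "1 \<le> i" "i < d" for i
  proof -
    have "u 0 - u i = 0 \<or> u 0 + u i = 0"
      using none that mink_null_pos[OF that, of u] mink_null_neg[OF that, of u] by auto
    then have "u i = u 0 \<or> u i = - u 0"
      by (auto simp: eq_neg_iff_add_eq_0 add.commute)
    then show ?thesis
      by auto
  qed
  have "(\<Sum>i\<in>{1,2}. u i * u i) \<le> (\<Sum>i\<in>{1..<d}. u i * u i)"
    using \<open>3 \<le> d\<close> by (intro sum_mono2) auto
  moreover have "(\<Sum>i\<in>{1..<d}. u i * u i) = u 0 * u 0"
    using u(2) by (simp add: mink_def)
  moreover have "(\<Sum>i\<in>{1,2}. u i * u i) = 2 * (u 0 * u 0)"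
    using sq[of 1] sq[of 2] \<open>3 \<le> d\<close> by simp
  ultimately show False
    using u0 by (auto simp: mult_le_0_iff)
qed

text \<open>In dimension at least 3, the null vectors not orthogonal to a fixed null vector \<open>u\<close>
  generate the whole space additively: \<open>u\<close> is orthogonal to at most one of \<open>e\<^sub>0 \<plusminus> e\<^sub>i\<close>
  for each \<open>i\<close>, and to neither for some \<open>i\<close>.\<close>
lemma spacetime_subsetI_null:
  fixes u :: "nat \<Rightarrow> 'q::linordered_field"
  assumes "3 \<le> d" and u: "u \<in> spacetime d" "mquad d u = 0" "u \<noteq> 0"
    and zero: "0 \<in> G"
    and add: "\<And>x y. x \<in> G \<Longrightarrow> y \<in> G \<Longrightarrow> x + y \<in> G"
    and null: "\<And>n. n \<in> spacetime d \<Longrightarrow> mquad d n = 0 \<Longrightarrow> mink d u n \<noteq> 0 \<Longrightarrow> n \<in> G"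
  shows "spacetime d \<subseteq> G"
proof -
  have null_smul: "smul c n \<in> G" if "n \<in> spacetime d" "mquad d n = 0" "mink d u n \<noteq> 0" for n c
    using that zero null[of "smul c n"] by (cases "c = 0") (simp_all add: mink_bilinear mquad_smul)
  obtain j where j: "1 \<le> j" "j < d" "mink d u (null_pos j) \<noteq> 0" "mink d u (null_neg j) \<noteq> 0"
    using exists_null_pos_neg_nonorthogonal[OF assms(1-4)] by blast
  have time: "smul c (unit_vec 0) \<in> G" for c
  proof -
    have "smul c (unit_vec 0) = smul (c / 2) (null_pos j) + smul (c / 2) (null_neg j)"
      by (auto simp: fun_eq_iff null_pos_def null_neg_def algebra_simps)
    then show ?thesis
      using add null_smul j by simp
  qed
  have space: "smul c (unit_vec i) \<in> G" if "1 \<le> i" "i < d" for i c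
  proof (cases "mink d u (null_pos i) = 0")
    case False
    have "smul c (unit_vec i) = smul c (null_pos i) + smul (- c) (unit_vec 0)"
      using that by (auto simp: fun_eq_iff null_pos_def algebra_simps)
    then show ?thesis
      using add null_smul time that False by simp
  next
    case True
    then have "mink d u (null_neg i) \<noteq> 0"
      using mink_null_pos[OF that, of u] mink_null_neg[OF that, of u] null_time_nonzero[OF u]
      by auto
    moreover have "smul c (unit_vec i) = smul c (unit_vec 0) + smul (- c) (null_neg i)"
      using that by (auto simp: fun_eq_iff null_neg_def algebra_simps)
    ultimately show ?thesis
      using add null_smul time that by simp
  qed
  show ?thesis
  proof (rule spacetime_subsetI_basis[OF zero add])
    show "smul c (unit_vec i) \<in> G" if "i < d" for i c
      using time space that by (cases "i = 0") auto
  qed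
qed

lemma null_triple_independent:
  fixes a b c :: "nat \<Rightarrow> 'q::field_char_0"
  assumes "mquad d a = 0" "mquad d b = 0" "mquad d c = 0"
    and ab: "mink d a b \<noteq> 0" and ac: "mink d a c \<noteq> 0" and bc: "mink d b c \<noteq> 0"
    and comb: "smul r a + smul s b + smul t c = 0"
  shows "r = 0 \<and> s = 0 \<and> t = 0"
proof -
  have "mink d a (smul r a + smul s b + smul t c) = 0"
    "mink d b (smul r a + smul s b + smul t c) = 0"
    "mink d c (smul r a + smul s b + smul t c) = 0"
    using comb by simp_all
  then have 1: "s * mink d a b + t * mink d a c = 0"
    and 2: "r * mink d a b + t * mink d b c = 0"
    and 3: "r * mink d a c + s * mink d b c = 0"
    using assms(1-3) by (simp_all add: mink_bilinear mink_commute[of d b a]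
        mink_commute[of d c a] mink_commute[of d c b])
  have rs: "r * mink d a b = - (t * mink d b c)" "s * mink d a b = - (t * mink d a c)"
    using 1 2 by (simp_all add: eq_neg_iff_add_eq_0)
  have "0 = mink d a b * (r * mink d a c + s * mink d b c)"
    using 3 by simp
  also have "\<dots> = (r * mink d a b) * mink d a c + (s * mink d a b) * mink d b c"
    by (simp add: algebra_simps)
  also have "\<dots> = - 2 * t * (mink d a c * mink d b c)"
    unfolding rs by (simp add: algebra_simps)
  finally have "t = 0"
    using ac bc by simp
  then show ?thesis
    using 1 2 ab by simp
qed

section \<open>Bijections preserving lightlike separation\<close>

locale light_cone_bijection =
  fixes d :: nat and F :: "(nat \<Rightarrow> 'q::linordered_field) \<Rightarrow> nat \<Rightarrow> 'q"
  assumes dim: "3 \<le> d"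
    and maps_to: "x \<in> spacetime d \<Longrightarrow> F x \<in> spacetime d"
    and onto: "y \<in> spacetime d \<Longrightarrow> \<exists>x\<in>spacetime d. F x = y"
    and lightlike_iff: "x \<in> spacetime d \<Longrightarrow> y \<in> spacetime d \<Longrightarrow>
      mquad d (F x - F y) = 0 \<longleftrightarrow> mquad d (x - y) = 0"
begin

lemma F_inj:
  assumes "x \<in> spacetime d" "y \<in> spacetime d" "F x = F y"
  shows "x = y"
  using dim assms
  by (intro eq_if_same_light_cone[of d]) (auto simp flip: lightlike_iff)

context
  fixes p n :: "nat \<Rightarrow> 'q"
  assumes p: "p \<in> spacetime d" and n: "n \<in> spacetime d" "mquad d n = 0" "n \<noteq> 0"
begin

lemma image_null_direction:
  "F (p + n) - F p \<in> spacetime d" "mquad d (F (p + n) - F p) = 0" "F (p + n) - F p \<noteq> 0"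
proof -
  have "mquad d ((p + n) - p) = 0"
    using n by simp
  then show "mquad d (F (p + n) - F p) = 0"
    using lightlike_iff p n by simp
  show "F (p + n) - F p \<noteq> 0"
    using F_inj[of "p + n" p] p n by auto
qed (use maps_to p n in simp)

text \<open>\<open>F\<close> maps the light line through \<open>p\<close> in direction \<open>n\<close> onto a light line; both inclusions
  follow from the fact that a point lightlike to two distinct lightlike-separated points lies on
  the line through them.\<close>
lemma light_line_image: "\<exists>t. F (p + smul s n) = F p + smul t (F (p + n) - F p)"
proof -
  have x: "p + smul s n \<in> spacetime d"
    using p n by simp
  have "(p + smul s n) - (p + n) = smul (s - 1) n"
    by (simp add: fun_eq_iff algebra_simps)
  then have "mquad d ((p + smul s n) - p) = 0" "mquad d ((p + smul s n) - (p + n)) = 0"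
    "mquad d (p - (p + n)) = 0"
    using n by (simp_all add: mquad_smul)
  then have "mquad d (F (p + smul s n) - F p) = 0" "mquad d (F (p + smul s n) - F (p + n)) = 0"
    "mquad d (F p - F (p + n)) = 0"
    using lightlike_iff p n x by simp_all
  moreover have "F p \<noteq> F (p + n)"
    using image_null_direction(3) by simp
  ultimately show ?thesis
    using on_light_line[of "F p" d "F (p + n)" "F (p + smul s n)"] maps_to p n x by simp
qed

lemma light_line_preimage: "\<exists>s. F (p + smul s n) = F p + smul t (F (p + n) - F p)"
proof -
  define v where "v = F (p + n) - F p"
  have v: "v \<in> spacetime d" "mquad d v = 0"
    using image_null_direction by (simp_all add: v_def)
  obtain x where x: "x \<in> spacetime d" "F x = F p + smul t v"
    using onto[of "F p + smul t v"] maps_to p v by auto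
  have "F x - F (p + n) = smul (t - 1) v"
    using x(2) by (simp add: v_def fun_eq_iff algebra_simps)
  then have "mquad d (F x - F p) = 0" "mquad d (F x - F (p + n)) = 0"
    using x v by (simp_all add: mquad_smul)
  then have "mquad d (x - p) = 0" "mquad d (x - (p + n)) = 0"
    using lightlike_iff[OF x(1) p] lightlike_iff[of x "p + n"] x(1) p n by simp_all
  moreover have "mquad d (p - (p + n)) = 0"
    using n by simp
  ultimately obtain c where "x = p + smul c ((p + n) - p)"
    using on_light_line[of p d "p + n" x] p n x by auto
  then show ?thesis
    using x by (auto simp: v_def)
qed

end

text \<open>The point \<open>F a + t b'\<close> on the image of the line \<open>a + s v\<close> is chosen such that the
  quadratic form of its difference to a point \<open>F p + r b\<close> of the image of \<open>p + s v\<close> does not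
  depend on \<open>r\<close>; one of these differences is the image of the null vector \<open>u\<close>, so all vanish.\<close>
lemma point_lightlike_to_image_line:
  assumes p: "p \<in> spacetime d"
    and u: "u \<in> spacetime d" "mquad d u = 0" "u \<noteq> 0"
    and v: "v \<in> spacetime d" "mquad d v = 0" "v \<noteq> 0"
    and nonorth: "mink d (F (p + v) - F p) (F (p + u + v) - F (p + u)) \<noteq> 0"
  shows "\<exists>s. \<forall>s'. mquad d (F (p + u + smul s v) - F (p + smul s' v)) = 0"
proof -
  define a where "a = p + u"
  define b where "b = F (p + v) - F p"
  define b' where "b' = F (a + v) - F a"
  define w where "w = F a - F p"
  define t where "t = - mink d w b / mink d b' b"
  have a: "a \<in> spacetime d"
    using p u by (simp add: a_def)
  have "mquad d w = 0" "mquad d b' = 0" "mquad d b = 0"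
    using image_null_direction[OF p u] image_null_direction[OF a v] image_null_direction[OF p v]
    by (simp_all add: w_def a_def b'_def b_def)
  moreover have "mink d w b + t * mink d b' b = 0"
    using nonorth by (simp add: t_def a_def b_def b'_def mink_commute)
  ultimately have quad: "mquad d (w + smul t b' - smul r b) = 2 * t * mink d w b'" for r
    by (simp add: mquad_add_smul_null)
  obtain s where s: "F (a + smul s v) = F a + smul t b'"
    using light_line_preimage[OF a v] by (auto simp: b'_def)
  have image_diff: "F (a + smul s v) - F (p + smul s' v) = w + smul t b' - smul r b"
    if "F (p + smul s' v) = F p + smul r b" for s' r
    using s that by (simp add: w_def fun_eq_iff)
  obtain r where r: "F (p + smul s v) = F p + smul r b"
    using light_line_image[OF p v] by (auto simp: b_def)
  have "(a + smul s v) - (p + smul s v) = u"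
    by (simp add: a_def)
  then have "mquad d (F (a + smul s v) - F (p + smul s v)) = 0"
    using lightlike_iff[of "a + smul s v" "p + smul s v"] a p u v by simp
  then have lightlike: "mquad d (w + smul t b' - smul r' b) = 0" for r'
    using quad unfolding image_diff[OF r] by simp
  have "mquad d (F (a + smul s v) - F (p + smul s' v)) = 0" for s'
  proof -
    obtain r' where "F (p + smul s' v) = F p + smul r' b"
      using light_line_image[OF p v] by (auto simp: b_def)
    then have "F (a + smul s v) - F (p + smul s' v) = w + smul t b' - smul r' b"
      by (rule image_diff)
    then show ?thesis
      using lightlike by simp
  qed
  then show ?thesis
    by (auto simp: a_def)
qed

lemma translate_light_line_orthogonal:
  assumes p: "p \<in> spacetime d"
    and u: "u \<in> spacetime d" "mquad d u = 0" "u \<noteq> 0"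
    and v: "v \<in> spacetime d" "mquad d v = 0" "v \<noteq> 0"
    and uv: "mink d u v \<noteq> 0"
  shows "mink d (F (p + v) - F p) (F (p + u + v) - F (p + u)) = 0"
proof (rule ccontr)
  assume "mink d (F (p + v) - F p) (F (p + u + v) - F (p + u)) \<noteq> 0"
  then obtain s where "mquad d (F (p + u + smul s v) - F (p + smul (s + 1) v)) = 0"
    using point_lightlike_to_image_line[OF p u v] by blast
  then have "mquad d ((p + u + smul s v) - (p + smul (s + 1) v)) = 0"
    using lightlike_iff[of "p + u + smul s v" "p + smul (s + 1) v"] p u v by simp
  moreover have "(p + u + smul s v) - (p + smul (s + 1) v) = u - v"
    by (simp add: fun_eq_iff algebra_simps)
  ultimately show False
    using u v uv by (simp add: mquad_diff)
qed

lemma translate_light_line_parallel: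
  assumes p: "p \<in> spacetime d"
    and u: "u \<in> spacetime d" "mquad d u = 0" "u \<noteq> 0"
    and v: "v \<in> spacetime d" "mquad d v = 0" "v \<noteq> 0"
    and uv: "mink d u v \<noteq> 0"
  shows "\<exists>c. F (p + u + v) - F (p + u) = smul c (F (p + v) - F p)"
proof -
  define b where "b = F (p + v) - F p"
  define b' where "b' = F (p + u + v) - F (p + u)"
  have "p + u \<in> spacetime d"
    using p u by simp
  then have "b' \<in> spacetime d" "mquad d b' = 0"
    using image_null_direction[of "p + u" v] v by (simp_all add: b'_def)
  moreover have "b \<in> spacetime d" "mquad d b = 0" "b \<noteq> 0"
    using image_null_direction[OF p v] by (simp_all add: b_def)
  moreover have "mink d b b' = 0"
    using translate_light_line_orthogonal[OF assms] by (simp add: b_def b'_def)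
  ultimately have "b' = smul (b' 0 / b 0) b"
    using null_orthogonal_parallel by blast
  then show ?thesis
    unfolding b_def b'_def by blast
qed

lemma parallelogram:
  assumes p: "p \<in> spacetime d"
    and u: "u \<in> spacetime d" "mquad d u = 0" "u \<noteq> 0"
    and v: "v \<in> spacetime d" "mquad d v = 0" "v \<noteq> 0"
    and uv: "mink d u v \<noteq> 0"
  shows "F (p + u + v) = F (p + u) + F (p + v) - F p"
proof -
  define a where "a = F (p + u) - F p"
  define b where "b = F (p + v) - F p"
  obtain c where c: "F (p + u + v) - F (p + u) = smul c b"
    using translate_light_line_parallel[OF p u v uv] by (auto simp: b_def)
  obtain c' where c': "F (p + u + v) - F (p + v) = smul c' a"
    using translate_light_line_parallel[OF p v u] uv
    by (auto simp: a_def mink_commute add.assoc add.commute[of v u])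
  have a: "mquad d a = 0"
    using image_null_direction[OF p u] by (simp add: a_def)
  have "mquad d ((p + u) - (p + v)) \<noteq> 0"
    using u v uv by (simp add: mquad_diff)
  then have "mquad d (a - b) \<noteq> 0"
    using lightlike_iff[of "p + u" "p + v"] p u v by (simp add: a_def b_def)
  then have ab: "mink d a b \<noteq> 0"
    using a image_null_direction[OF p v] by (simp add: mquad_diff b_def)
  have "a + smul c b = b + smul c' a"
    unfolding c[symmetric] c'[symmetric] unfolding a_def b_def by (simp add: algebra_simps)
  then have "mink d a (a + smul c b) = mink d a (b + smul c' a)"
    by simp
  then have "c * mink d a b = mink d a b"
    using a by (simp add: mink_bilinear)
  then have "c = 1"
    using ab by simp
  then show ?thesis
    using c by (simp add: b_def algebra_simps)
qed

definition second_diff :: "(nat \<Rightarrow> 'q) \<Rightarrow> (nat \<Rightarrow> 'q) \<Rightarrow> (nat \<Rightarrow> 'q) \<Rightarrow> nat \<Rightarrow> 'q" where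
  "second_diff p x y = F (p + x + y) - F (p + x) - F (p + y) + F p"

lemma second_diff_commute: "second_diff p x y = second_diff p y x"
  by (simp add: second_diff_def ac_simps)

lemma second_diff_zero: "second_diff p x 0 = 0"
  by (simp add: second_diff_def)

lemma second_diff_add: "second_diff p x (y + z) = second_diff p x y + second_diff (p + y) x z"
proof -
  have "p + y + x + z = p + x + (y + z)" "p + y + x = p + x + y" "p + y + z = p + (y + z)"
    "p + x + y + z = p + x + (y + z)"
    by (simp_all add: ac_simps)
  then show ?thesis
    unfolding second_diff_def by (simp add: algebra_simps)
qed

lemma second_diff_null_eq_0:
  assumes u: "u \<in> spacetime d" "mquad d u = 0" "u \<noteq> 0"
    and "p \<in> spacetime d" "y \<in> spacetime d"
  shows "second_diff p u y = 0"
proof -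
  let ?G = "{y \<in> spacetime d. \<forall>p\<in>spacetime d. second_diff p u y = 0}"
  have "spacetime d \<subseteq> ?G"
  proof (rule spacetime_subsetI_null[OF dim u])
    show "0 \<in> ?G"
      by (simp add: second_diff_zero)
    show "y + z \<in> ?G" if "y \<in> ?G" "z \<in> ?G" for y z
      using that by (simp add: second_diff_add)
    show "n \<in> ?G" if "n \<in> spacetime d" "mquad d n = 0" "mink d u n \<noteq> 0" for n
    proof -
      have "n \<noteq> 0"
        using that by auto
      with that u show ?thesis
        by (auto simp: second_diff_def parallelogram)
    qed
  qed
  then show ?thesis
    using assms by blast
qed

lemma second_diff_eq_0:
  assumes "p \<in> spacetime d" "x \<in> spacetime d" "y \<in> spacetime d"
  shows "second_diff p x y = 0"
proof -
  let ?G = "{y \<in> spacetime d. \<forall>p\<in>spacetime d. second_diff p x y = 0}"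
  have "spacetime d \<subseteq> ?G"
  proof (rule spacetime_subsetI_null[OF dim, of "null_pos 1"])
    show "0 \<in> ?G"
      by (simp add: second_diff_zero)
    show "y + z \<in> ?G" if "y \<in> ?G" "z \<in> ?G" for y z
      using that by (simp add: second_diff_add)
    show "n \<in> ?G" if "n \<in> spacetime d" "mquad d n = 0" "mink d (null_pos 1) n \<noteq> 0" for n
    proof -
      have "n \<noteq> 0"
        using that by auto
      with that \<open>x \<in> spacetime d\<close> show ?thesis
        by (simp add: second_diff_commute second_diff_null_eq_0)
    qed
  qed (use dim in simp_all)
  then show ?thesis
    using assms by blast
qed

definition h :: "(nat \<Rightarrow> 'q) \<Rightarrow> nat \<Rightarrow> 'q" where
  "h x = F x - F 0"

lemma h_zero [simp]: "h 0 = 0"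
  by (simp add: h_def)

lemma h_add: "x \<in> spacetime d \<Longrightarrow> y \<in> spacetime d \<Longrightarrow> h (x + y) = h x + h y"
  using second_diff_eq_0[of 0 x y] by (simp add: h_def second_diff_def fun_eq_iff algebra_simps)

lemma h_diff: "x \<in> spacetime d \<Longrightarrow> y \<in> spacetime d \<Longrightarrow> h (x - y) = h x - h y"
  using h_add[of "x - y" y] by simp

lemma F_diff: "x \<in> spacetime d \<Longrightarrow> y \<in> spacetime d \<Longrightarrow> F x - F y = h (x - y)"
  by (simp add: h_diff) (simp add: h_def)

lemma h_lightlike_iff: "x \<in> spacetime d \<Longrightarrow> mquad d (h x) = 0 \<longleftrightarrow> mquad d x = 0"
  using lightlike_iff[of x 0] by (simp add: h_def)

context
  fixes n :: "nat \<Rightarrow> 'q"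
  assumes n: "n \<in> spacetime d" "mquad d n = 0" "n \<noteq> 0"
begin

lemma h_null: "h n \<in> spacetime d" "mquad d (h n) = 0" "h n \<noteq> 0"
  using image_null_direction[OF spacetime_zero n] by (simp_all add: h_def)

lemma h_null_line_image: "\<exists>t. h (smul s n) = smul t (h n)"
  using light_line_image[OF spacetime_zero n, of s] by (simp add: h_def diff_eq_eq add.commute)

lemma h_null_line_preimage: "\<exists>s. h (smul s n) = smul t (h n)"
  using light_line_preimage[OF spacetime_zero n, of t] by (simp add: h_def diff_eq_eq add.commute)

definition ratio :: "'q \<Rightarrow> 'q" where
  "ratio s = (THE t. h (smul s n) = smul t (h n))"

lemma h_smul_null: "h (smul s n) = smul (ratio s) (h n)"
proof -
  obtain t where t: "h (smul s n) = smul t (h n)"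
    using h_null_line_image by blast
  moreover have "ratio s = t"
    unfolding ratio_def
  proof (rule the_equality)
    show "t' = t" if "h (smul s n) = smul t' (h n)" for t'
      using that t smul_cancel h_null(3) by metis
  qed (rule t)
  ultimately show ?thesis
    by simp
qed

lemma ratio_surj: "\<exists>s. ratio s = t"
proof -
  obtain s where "h (smul s n) = smul t (h n)"
    using h_null_line_preimage by blast
  then show ?thesis
    using smul_cancel h_null(3) by (metis h_smul_null)
qed

lemma ratio_add: "ratio (a + b) = ratio a + ratio b"
proof -
  have "smul (ratio (a + b)) (h n) = h (smul a n) + h (smul b n)"
    using n by (simp flip: h_smul_null h_add add: smul_add_left)
  also have "\<dots> = smul (ratio a + ratio b) (h n)"
    by (simp add: h_smul_null smul_add_left)
  finally show ?thesis
    using smul_cancel h_null(3) by blast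
qed

lemma ratio_one: "ratio 1 = 1"
  using h_smul_null[of 1] smul_cancel[of "ratio 1" "h n" 1] h_null(3) by simp

end

lemma h_mink_nonzero:
  assumes "x \<in> spacetime d" "y \<in> spacetime d" "mquad d x = 0" "mquad d y = 0"
    and "mquad d (x - y) \<noteq> 0"
  shows "mink d (h x) (h y) \<noteq> 0"
proof -
  have "mquad d (h x - h y) \<noteq> 0"
    using assms h_lightlike_iff[of "x - y"] by (simp add: h_diff)
  moreover have "mquad d (h x) = 0" "mquad d (h y) = 0"
    using assms h_lightlike_iff by auto
  ultimately show ?thesis
    by (simp add: mquad_diff)
qed

text \<open>The four null vectors \<open>e\<^sub>0 \<plusminus> e\<^sub>i\<close>, \<open>e\<^sub>0 \<plusminus> e\<^sub>j\<close> satisfy one linear relation; their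
  images satisfy it too, and any three of them are linearly independent, which forces the
  ratio functions of all four to agree.\<close>
lemma ratio_null_pos_neg_eq:
  assumes i: "1 \<le> i" "i < d" and j: "1 \<le> j" "j < d" and "i \<noteq> j"
  shows "ratio (null_pos i) s = ratio (null_neg j) s \<and> ratio (null_neg i) s = ratio (null_neg j) s
    \<and> ratio (null_pos j) s = ratio (null_neg j) s"
proof -
  define A where "A = h (null_pos i)"
  define B where "B = h (null_neg i)"
  define C where "C = h (null_pos j)"
  define D where "D = h (null_neg j)"
  have null: "mquad d A = 0" "mquad d B = 0" "mquad d C = 0"
    using i j h_lightlike_iff by (simp_all add: A_def B_def C_def)
  have "null_pos i - null_neg i = smul 2 (unit_vec i :: nat \<Rightarrow> 'q)"
    by (simp add: null_pos_def null_neg_def fun_eq_iff)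
  then have "mquad d (null_pos i - null_neg i :: nat \<Rightarrow> 'q) \<noteq> 0"
    using i by (simp add: mquad_smul mink_unit_vec_right)
  moreover have "mquad d (null_pos i - null_pos j :: nat \<Rightarrow> 'q) \<noteq> 0"
    "mquad d (null_neg i - null_pos j :: nat \<Rightarrow> 'q) \<noteq> 0"
    using i j \<open>i \<noteq> j\<close>
    by (simp_all add: null_pos_def null_neg_def mink_bilinear mink_unit_vec_left
        mink_unit_vec_right)
  ultimately have AB: "mink d A B \<noteq> 0" and AC: "mink d A C \<noteq> 0" and BC: "mink d B C \<noteq> 0"
    using i j by (simp_all add: A_def B_def C_def h_mink_nonzero)
  have sum: "null_pos i + null_neg i = (null_pos j + null_neg j :: nat \<Rightarrow> 'q)"
    by (simp add: null_pos_def null_neg_def)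
  then have "A + B = C + D"
    using i j by (simp add: A_def B_def C_def D_def flip: h_add)
  then have D: "D = A + B - C"
    by (simp add: algebra_simps)
  have "h (smul s (null_pos i)) + h (smul s (null_neg i))
      = h (smul s (null_pos j)) + h (smul s (null_neg j))"
    using i j sum by (simp flip: h_add smul_add_right)
  then have "smul (ratio (null_pos i) s) A + smul (ratio (null_neg i) s) B
      = smul (ratio (null_pos j) s) C + smul (ratio (null_neg j) s) D"
    using i j by (simp add: h_smul_null A_def B_def C_def D_def)
  then have "smul (ratio (null_pos i) s - ratio (null_neg j) s) A
      + smul (ratio (null_neg i) s - ratio (null_neg j) s) B
      + smul (ratio (null_neg j) s - ratio (null_pos j) s) C = 0"
    unfolding D by (simp add: fun_eq_iff algebra_simps)
  from null_triple_independent[OF null AB AC BC this] show ?thesis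
    by simp
qed

definition phi :: "'q \<Rightarrow> 'q" where
  "phi = ratio (null_pos 1)"

lemma ratio_null_pos: "1 \<le> i \<Longrightarrow> i < d \<Longrightarrow> ratio (null_pos i) = phi"
  and ratio_null_neg: "1 \<le> i \<Longrightarrow> i < d \<Longrightarrow> ratio (null_neg i) = phi"
proof -
  assume i: "1 \<le> i" "i < d"
  have "ratio (null_pos i) s = phi s \<and> ratio (null_neg i) s = phi s" for s
  proof (cases "i = 1")
    case True
    then show ?thesis
      using ratio_null_pos_neg_eq[of 1 2 s] dim by (simp add: phi_def)
  next
    case False
    then show ?thesis
      using ratio_null_pos_neg_eq[of i 1 s] dim i by (simp add: phi_def)
  qed
  then show "ratio (null_pos i) = phi" "ratio (null_neg i) = phi"
    by auto
qed

lemma null_pos_1: "null_pos 1 \<in> spacetime d" "mquad d (null_pos 1 :: nat \<Rightarrow> 'q) = 0"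
  "null_pos 1 \<noteq> (0 :: nat \<Rightarrow> 'q)"
  using dim by simp_all

lemma phi_add: "phi (a + b) = phi a + phi b"
  using ratio_add[OF null_pos_1] by (simp add: phi_def)

lemma phi_one: "phi 1 = 1"
  using ratio_one[OF null_pos_1] by (simp add: phi_def)

lemma phi_surj: "\<exists>s. phi s = t"
  using ratio_surj[OF null_pos_1] by (simp add: phi_def)

lemma phi_zero: "phi 0 = 0"
  using phi_add[of 0 0] by simp

lemma phi_uminus: "phi (- a) = - phi a"
  using phi_add[of a "- a"] by (simp add: phi_zero eq_neg_iff_add_eq_0)

lemma phi_diff: "phi (a - b) = phi a - phi b"
  using phi_add[of "a - b" b] by simp

lemma h_smul_null_pos: "1 \<le> i \<Longrightarrow> i < d \<Longrightarrow> h (smul s (null_pos i)) = smul (phi s) (h (null_pos i))"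
  and h_smul_null_neg: "1 \<le> i \<Longrightarrow> i < d \<Longrightarrow> h (smul s (null_neg i)) = smul (phi s) (h (null_neg i))"
  by (simp_all add: h_smul_null ratio_null_pos ratio_null_neg)

lemma h_null_parabola:
  "mquad d (h (null_pos 1) + smul (phi (t * t)) (h (null_neg 1))
    + smul (phi t) (h (null_pos 2) - h (null_neg 2))) = 0"
proof -
  have d: "1 < d" "2 < d"
    using dim by auto
  define w :: "nat \<Rightarrow> 'q"
    where "w = null_pos 1 + smul (t * t) (null_neg 1) + smul t (null_pos 2 - null_neg 2)"
  have w: "w \<in> spacetime d"
    using d by (simp add: w_def)
  have "w = smul (1 + t * t) (unit_vec 0) + smul (1 - t * t) (unit_vec 1)
      + smul (2 * t) (unit_vec 2)"
    by (auto simp: w_def null_pos_def null_neg_def fun_eq_iff algebra_simps)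
  then have "mquad d w = 0"
    using d by (simp add: mink_bilinear mink_unit_vec_left mink_unit_vec_right algebra_simps)
  then have "mquad d (h w) = 0"
    using h_lightlike_iff w by simp
  moreover have "h w = h (null_pos 1) + smul (phi (t * t)) (h (null_neg 1))
      + smul (phi t) (h (null_pos 2) - h (null_neg 2))"
    using d by (simp add: w_def h_add h_diff h_smul_null_pos h_smul_null_neg smul_diff_right)
  ultimately show ?thesis
    by simp
qed

text \<open>The images of the null vectors \<open>(1 + t\<^sup>2) e\<^sub>0 + (1 - t\<^sup>2) e\<^sub>1 \<plusminus> 2 t e\<^sub>2\<close> are null;
  adding the two conditions isolates \<open>phi (t\<^sup>2) - (phi t)\<^sup>2\<close>.\<close>
lemma phi_square: "phi (t * t) = phi t * phi t"
proof -
  define A where "A = h (null_pos 1)"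
  define B where "B = h (null_neg 1)"
  define C where "C = h (null_pos 2)"
  define D where "D = h (null_neg 2)"
  have d: "1 < d" "2 < d"
    using dim by auto
  have null: "mquad d A = 0" "mquad d B = 0" "mquad d C = 0" "mquad d D = 0"
    using d h_lightlike_iff by (simp_all add: A_def B_def C_def D_def)
  have "null_pos 1 - null_neg 1 = smul 2 (unit_vec 1 :: nat \<Rightarrow> 'q)"
    by (simp add: null_pos_def null_neg_def fun_eq_iff)
  then have "mquad d (null_pos 1 - null_neg 1 :: nat \<Rightarrow> 'q) \<noteq> 0"
    using d by (simp add: mquad_smul mink_unit_vec_right)
  then have AB: "mink d A B \<noteq> 0"
    using d by (simp add: A_def B_def h_mink_nonzero)
  have "A + B = C + D"
    using d by (simp add: A_def B_def C_def D_def null_pos_def null_neg_def flip: h_add)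
  then have "mink d C D = mink d A B"
    using mquad_add[of d A B] mquad_add[of d C D] null by simp
  then have CD: "mquad d (C - D) = - 2 * mink d A B"
    using null by (simp add: mquad_diff)
  have expand: "mquad d (A + smul a B + smul u (C - D)) = 2 * a * mink d A B
      + 2 * u * mink d A (C - D) + 2 * a * u * mink d B (C - D) + u * u * mquad d (C - D)"
    for a u
    using null by (simp add: mink_bilinear mink_commute[of d B A] mink_commute[of d "C - D" A]
        mink_commute[of d "C - D" B] mink_commute[of d D A] mink_commute[of d D B]
        mink_commute[of d C A] mink_commute[of d C B] algebra_simps)
  have "2 * (2 * phi (t * t) * mink d A B + phi t * phi t * mquad d (C - D)) = 0"
    using h_null_parabola[of t] h_null_parabola[of "- t"] expand[of "phi (t * t)" "phi t"]
      expand[of "phi (t * t)" "- phi t"]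
    by (simp add: phi_uminus A_def B_def C_def D_def algebra_simps)
  then have "4 * (phi (t * t) - phi t * phi t) * mink d A B = 0"
    unfolding CD by (simp add: algebra_simps)
  then show ?thesis
    using AB by simp
qed

lemma phi_mult: "phi (s * t) = phi s * phi t"
proof -
  have "4 * phi (s * t) = phi (s * t + s * t + s * t + s * t)"
    by (simp only: phi_add algebra_simps)
  also have "\<dots> = phi ((s + t) * (s + t) - (s - t) * (s - t))"
    by (rule arg_cong[where f = phi]) (simp add: algebra_simps)
  also have "\<dots> = (phi s + phi t) * (phi s + phi t) - (phi s - phi t) * (phi s - phi t)"
    by (simp only: phi_diff phi_square phi_add)
  also have "\<dots> = 4 * (phi s * phi t)"
    by (simp add: algebra_simps)
  finally show ?thesis
    by simp
qed

lemma h_smul: "x \<in> spacetime d \<Longrightarrow> h (smul c x) = smul (phi c) (h x)"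
proof -
  let ?G = "{x \<in> spacetime d. \<forall>c. h (smul c x) = smul (phi c) (h x)}"
  have G_smul: "smul a x \<in> ?G" if "x \<in> ?G" for x a
    using that by (simp add: smul_smul phi_mult mult.commute)
  have G_add: "x + y \<in> ?G" if "x \<in> ?G" "y \<in> ?G" for x y
    using that by (simp add: h_add smul_add_right)
  have "spacetime d \<subseteq> ?G"
  proof (rule spacetime_subsetI_basis)
    show "smul c (unit_vec i) \<in> ?G" if "i < d" for i c
    proof -
      have "null_pos k \<in> ?G" "null_neg k \<in> ?G" if "1 \<le> k" "k < d" for k
        using that by (simp_all add: h_smul_null_pos h_smul_null_neg)
      moreover have "unit_vec i = smul (1 / 2) (null_pos 1 + null_neg 1 :: nat \<Rightarrow> 'q)" if "i = 0"
        using that by (simp add: fun_eq_iff null_pos_def null_neg_def)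
      moreover have "unit_vec i = smul (1 / 2) (null_pos i + smul (- 1) (null_neg i) :: nat \<Rightarrow> 'q)"
        if "i \<noteq> 0"
        using that by (simp add: fun_eq_iff null_pos_def null_neg_def)
      ultimately have "unit_vec i \<in> ?G"
        using dim \<open>i < d\<close> G_add G_smul by (cases "i = 0") (simp_all add: Suc_le_eq)
      then show ?thesis
        by (rule G_smul)
    qed
  qed (use G_add in \<open>simp_all add: phi_zero\<close>)
  then show "x \<in> spacetime d \<Longrightarrow> h (smul c x) = smul (phi c) (h x)"
    by blast
qed

end

locale worldview_transformation = light_cone_bijection d F
  for d and F :: "(nat \<Rightarrow> 'q::linordered_field) \<Rightarrow> nat \<Rightarrow> 'q" +
  assumes mquad_simultaneous: "x \<in> spacetime d \<Longrightarrow> y \<in> spacetime d \<Longrightarrow> x 0 = y 0 \<Longrightarrow>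
    F x 0 = F y 0 \<Longrightarrow> mquad d (F x - F y) = mquad d (x - y)"
begin

lemma h_mquad_simultaneous:
  "x \<in> spacetime d \<Longrightarrow> x 0 = 0 \<Longrightarrow> h x 0 = 0 \<Longrightarrow> mquad d (h x) = mquad d x"
  using mquad_simultaneous[of x 0] by (simp add: h_def)

lemma exists_simultaneous_for_both:
  obtains x where "x \<in> spacetime d" "x 0 = 0" "x \<noteq> 0" "h x 0 = 0"
proof (cases "h (unit_vec 1) 0 = 0")
  case True
  moreover have "unit_vec 1 \<noteq> (0 :: nat \<Rightarrow> 'q)"
    by (metis unit_vec_apply zero_fun_apply zero_neq_one)
  ultimately show ?thesis
    using dim that[of "unit_vec 1"] by simp
next
  case False
  obtain a where a: "phi a = h (unit_vec 2) 0"
    using phi_surj by blast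
  obtain b where b: "phi b = - h (unit_vec 1) 0"
    using phi_surj by blast
  have "b \<noteq> 0"
    using b False phi_zero by auto
  define x where "x = smul a (unit_vec 1) + smul b (unit_vec 2 :: nat \<Rightarrow> 'q)"
  have x: "x \<in> spacetime d" "x 0 = 0" "x 2 = b"
    using dim by (simp_all add: x_def)
  have "h x = smul (phi a) (h (unit_vec 1)) + smul (phi b) (h (unit_vec 2))"
    using dim by (simp add: x_def h_add h_smul)
  then have "h x 0 = 0"
    using a b by simp
  moreover have "x \<noteq> 0"
    using x(3) \<open>b \<noteq> 0\<close> by auto
  ultimately show ?thesis
    using that x(1,2) by blast
qed

text \<open>On a vector that is simultaneous with the origin in both frames \<open>h\<close> preserves the
  (nonzero) quadratic form, so \<open>phi\<close> preserves squares; a field endomorphism doing so is the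
  identity.\<close>
lemma phi_id: "phi t = t"
proof -
  obtain x where x: "x \<in> spacetime d" "x 0 = 0" "x \<noteq> 0" "h x 0 = 0"
    using exists_simultaneous_for_both by blast
  have "mquad d x \<noteq> 0"
    using time_zero_mquad_neg[OF x(1-3)] by simp
  moreover have "phi s * phi s * mquad d (h x) = s * s * mquad d x" for s
  proof -
    have "h (smul s x) = smul (phi s) (h x)"
      using h_smul x by simp
    then have "mquad d (h (smul s x)) = mquad d (smul s x)"
      using x by (intro h_mquad_simultaneous) simp_all
    then show ?thesis
      using h_smul x by (simp add: mquad_smul)
  qed
  moreover have "mquad d (h x) = mquad d x"
    using h_mquad_simultaneous x by simp
  ultimately have sq: "phi s * phi s = s * s" for s
    by simp
  have "phi t * phi t + 2 * phi t + 1 = t * t + 2 * t + 1"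
    using sq[of "t + 1"] by (simp add: phi_add phi_one algebra_simps)
  then have "2 * phi t = 2 * t"
    unfolding sq[of t] by (simp only: add_left_cancel add_right_cancel)
  then show ?thesis
    by simp
qed

lemma h_smul_linear: "x \<in> spacetime d \<Longrightarrow> h (smul c x) = smul c (h x)"
  by (simp add: h_smul phi_id)

definition conformal_factor where
  "conformal_factor = mquad d (h (unit_vec 0))"

lemma h_mink_unit_vec_time_space:
  assumes i: "1 \<le> i" "i < d"
  shows "mink d (h (unit_vec 0)) (h (unit_vec i)) = 0"
    and "mquad d (h (unit_vec i)) = - conformal_factor"
proof -
  have "mquad d (h (unit_vec 0 + unit_vec i)) = 0" "mquad d (h (unit_vec 0 - unit_vec i)) = 0"
    using i h_lightlike_iff mquad_null_pos mquad_null_neg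
    by (simp_all add: null_pos_def null_neg_def)
  then have
    "conformal_factor + 2 * mink d (h (unit_vec 0)) (h (unit_vec i)) + mquad d (h (unit_vec i)) = 0"
    "conformal_factor - 2 * mink d (h (unit_vec 0)) (h (unit_vec i)) + mquad d (h (unit_vec i)) = 0"
    using i by (simp_all add: h_add h_diff mquad_add mquad_diff conformal_factor_def)
  then show "mink d (h (unit_vec 0)) (h (unit_vec i)) = 0"
    and "mquad d (h (unit_vec i)) = - conformal_factor"
    by (simp_all add: algebra_simps)
qed

lemma h_mink_unit_vec_space_space:
  assumes i: "1 \<le> i" "i < d" and j: "1 \<le> j" "j < d" and "i \<noteq> j"
  shows "mink d (h (unit_vec i)) (h (unit_vec j)) = 0"
proof -
  define w where "w = smul 5 (unit_vec 0) + smul 3 (unit_vec i) + smul 4 (unit_vec j :: nat \<Rightarrow> 'q)"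
  have w: "w \<in> spacetime d"
    using i j by (simp add: w_def)
  have "mquad d w = 0"
    using i j \<open>i \<noteq> j\<close> by (simp add: w_def mink_bilinear mink_unit_vec_right)
  then have "mquad d (h w) = 0"
    using h_lightlike_iff w by simp
  moreover have "h w = smul 5 (h (unit_vec 0)) + smul 3 (h (unit_vec i)) + smul 4 (h (unit_vec j))"
    using i j by (simp add: w_def h_add h_smul_linear)
  ultimately have "25 * conformal_factor + 9 * mquad d (h (unit_vec i))
      + 16 * mquad d (h (unit_vec j)) + 30 * mink d (h (unit_vec 0)) (h (unit_vec i))
      + 40 * mink d (h (unit_vec 0)) (h (unit_vec j))
      + 24 * mink d (h (unit_vec i)) (h (unit_vec j)) = 0"
    by (simp add: mink_bilinear conformal_factor_def
        mink_commute[of d "h (unit_vec i)" "h (unit_vec 0)"]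
        mink_commute[of d "h (unit_vec j)" "h (unit_vec 0)"]
        mink_commute[of d "h (unit_vec j)" "h (unit_vec i)"]
        algebra_simps)
  then show ?thesis
    using h_mink_unit_vec_time_space[OF i] h_mink_unit_vec_time_space[OF j] by simp
qed

lemma h_mink_unit_vec:
  assumes "a < d" "b < d"
  shows "mink d (h (unit_vec a)) (h (unit_vec b))
    = conformal_factor * mink d (unit_vec a) (unit_vec b)"
proof -
  consider "a = 0" "b = 0" | "a = 0" "b \<noteq> 0" | "a \<noteq> 0" "b = 0" | "a \<noteq> 0" "a = b"
    | "a \<noteq> 0" "b \<noteq> 0" "a \<noteq> b"
    by blast
  then show ?thesis
  proof cases
    case 1
    then show ?thesis
      by (simp add: conformal_factor_def mink_unit_vec_right)
  next
    case 2
    then show ?thesis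
      using assms h_mink_unit_vec_time_space[of b] by (simp add: mink_unit_vec_right)
  next
    case 3
    then show ?thesis
      using assms h_mink_unit_vec_time_space[of a] by (simp add: mink_unit_vec_right mink_commute)
  next
    case 4
    then show ?thesis
      using assms h_mink_unit_vec_time_space[of a] by (simp add: mink_unit_vec_right)
  next
    case 5
    then show ?thesis
      using assms h_mink_unit_vec_space_space[of a b] by (simp add: mink_unit_vec_right)
  qed
qed

lemma h_mink:
  assumes "x \<in> spacetime d" "y \<in> spacetime d"
  shows "mink d (h x) (h y) = conformal_factor * mink d x y"
proof -
  let ?G1 = "{y \<in> spacetime d.
    \<forall>a<d. mink d (h (unit_vec a)) (h y) = conformal_factor * mink d (unit_vec a) y}"
  have "spacetime d \<subseteq> ?G1"
  proof (rule spacetime_subsetI_basis)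
    show "y + z \<in> ?G1" if "y \<in> ?G1" "z \<in> ?G1" for y z
      using that by (simp add: h_add mink_bilinear algebra_simps)
    show "smul c (unit_vec i) \<in> ?G1" if "i < d" for i c
      using that by (simp add: h_smul_linear h_mink_unit_vec mink_bilinear)
  qed simp
  let ?G2 = "{x \<in> spacetime d. \<forall>y\<in>spacetime d. mink d (h x) (h y) = conformal_factor * mink d x y}"
  have "spacetime d \<subseteq> ?G2"
  proof (rule spacetime_subsetI_basis)
    show "y + z \<in> ?G2" if "y \<in> ?G2" "z \<in> ?G2" for y z
      using that by (simp add: h_add mink_bilinear algebra_simps)
    show "smul c (unit_vec i) \<in> ?G2" if "i < d" for i c
      using that \<open>spacetime d \<subseteq> ?G1\<close> by (auto simp: h_smul_linear mink_bilinear)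
  qed simp
  then show ?thesis
    using assms by blast
qed

lemma conformal_factor_eq_1: "conformal_factor = 1"
proof -
  obtain x where x: "x \<in> spacetime d" "x 0 = 0" "x \<noteq> 0" "h x 0 = 0"
    using exists_simultaneous_for_both by blast
  have "mquad d x \<noteq> 0"
    using time_zero_mquad_neg[OF x(1-3)] by simp
  moreover have "mquad d (h x) = mquad d x"
    using h_mquad_simultaneous x by simp
  ultimately show ?thesis
    using h_mink[OF x(1) x(1)] by simp
qed

theorem mquad_preserved:
  "x \<in> spacetime d \<Longrightarrow> y \<in> spacetime d \<Longrightarrow> mquad d (F x - F y) = mquad d (x - y)"
  by (simp add: F_diff h_mink conformal_factor_eq_1)

end

section \<open>Coordinates as lists\<close>

definition vec_of_list :: "'q::zero list \<Rightarrow> nat \<Rightarrow> 'q" where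
  "vec_of_list p = (\<lambda>i. if i < length p then p ! i else 0)"

definition list_of_vec :: "nat \<Rightarrow> (nat \<Rightarrow> 'q) \<Rightarrow> 'q list" where
  "list_of_vec d x = map x [0..<d]"

lemma vec_of_list_spacetime: "length p = d \<Longrightarrow> vec_of_list p \<in> spacetime d"
  by (simp add: vec_of_list_def spacetime_def)

lemma length_list_of_vec [simp]: "length (list_of_vec d x) = d"
  by (simp add: list_of_vec_def)

lemma vec_of_list_of_vec: "x \<in> spacetime d \<Longrightarrow> vec_of_list (list_of_vec d x) = x"
  by (auto simp: vec_of_list_def list_of_vec_def spacetime_def fun_eq_iff)

lemma list_of_vec_of_list: "length p = d \<Longrightarrow> list_of_vec d (vec_of_list p) = p"
  by (auto simp: vec_of_list_def list_of_vec_def intro: nth_equalityI)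

lemma hd_eq_vec_of_list: "p \<noteq> [] \<Longrightarrow> hd p = vec_of_list p 0"
  by (cases p) (auto simp: vec_of_list_def)

lemma sum_squares_vsub_tl:
  fixes p q :: "'q::comm_ring_1 list"
  assumes "length p = d" "length q = d"
  shows "sum_list (map (\<lambda>x. x ^ 2) (vsub (tl p) (tl q)))
    = (\<Sum>i\<in>{1..<d}. (vec_of_list p i - vec_of_list q i) ^ 2)"
proof -
  define g where "g i = (vec_of_list p i - vec_of_list q i) ^ 2" for i
  have "sum_list (map (\<lambda>x. x ^ 2) (vsub (tl p) (tl q)))
      = (\<Sum>i\<in>{0..<d - 1}. (vsub (tl p) (tl q) ! i) ^ 2)"
    using assms by (simp add: sum_list_sum_nth vsub_def)
  also have "\<dots> = (\<Sum>i\<in>{0..<d - 1}. g (Suc i))"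
    using assms by (intro sum.cong) (auto simp: g_def vsub_def vec_of_list_def nth_tl)
  also have "\<dots> = (\<Sum>i\<in>{Suc 0..<Suc (d - 1)}. g i)"
    by (simp only: sum.shift_bounds_Suc_ivl)
  also have "\<dots> = (\<Sum>i\<in>{1..<d}. g i)"
    by (cases d) simp_all
  finally show ?thesis
    by (simp add: g_def)
qed

lemma mquad_vec_of_list:
  fixes p q :: "'q::comm_ring_1 list"
  assumes "length p = d" "length q = d" "1 \<le> d"
  shows "mquad d (vec_of_list p - vec_of_list q)
    = (hd p - hd q) ^ 2 - sum_list (map (\<lambda>x. x ^ 2) (vsub (tl p) (tl q)))"
proof -
  have "hd p = vec_of_list p 0" "hd q = vec_of_list q 0"
    using assms by (auto intro!: hd_eq_vec_of_list)
  then show ?thesis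
    unfolding sum_squares_vsub_tl[OF assms(1,2)] by (simp add: mink_def power2_eq_square)
qed

lemma esqrt:
  fixes s :: "'q::linordered_field"
  assumes "AxEOF TYPE('q)" and "0 \<le> s"
  shows "0 \<le> esqrt s" "esqrt s * esqrt s = s"
proof -
  obtain y where y: "0 \<le> y" "y * y = s"
  proof (cases "s = 0")
    case False
    then obtain z where "z * z = s"
      using assms unfolding AxEOF_def by force
    then show ?thesis
      using that[of "\<bar>z\<bar>"] by simp
  qed simp
  have "esqrt s = y"
    unfolding esqrt_def
  proof (rule the_equality)
    show "z = y" if "0 \<le> z \<and> z * z = s" for z
      using that y power2_eq_iff_nonneg[of z y] by (simp add: power2_eq_square)
  qed (use y in simp)
  with y show "0 \<le> esqrt s" "esqrt s * esqrt s = s"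
    by simp_all
qed

lemma sum_squares_nonneg: "0 \<le> sum_list (map (\<lambda>x. x ^ 2) (xs :: 'q::linordered_idom list))"
  by (induction xs) auto

lemma elen_square:
  fixes xs :: "'q::linordered_field list"
  assumes "AxEOF TYPE('q)"
  shows "elen xs ^ 2 = sum_list (map (\<lambda>x. x ^ 2) xs)"
  using esqrt[OF assms sum_squares_nonneg] by (simp add: elen_def power2_eq_square)

lemma elen_eq_abs_iff:
  fixes xs :: "'q::linordered_field list"
  assumes "AxEOF TYPE('q)"
  shows "elen xs = \<bar>a\<bar> \<longleftrightarrow> sum_list (map (\<lambda>x. x ^ 2) xs) = a ^ 2"
proof -
  have "0 \<le> elen xs"
    using esqrt[OF assms sum_squares_nonneg] by (simp add: elen_def)
  then have "elen xs = \<bar>a\<bar> \<longleftrightarrow> elen xs ^ 2 = \<bar>a\<bar> ^ 2"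
    using power2_eq_iff_nonneg abs_ge_zero by metis
  then show ?thesis
    by (simp add: elen_square[OF assms])
qed

section \<open>Models of \<open>SpecRel\<close>\<close>

lemma simul_iff_time_eq_0: "simul d W m e1 e2 \<longleftrightarrow> time d W m e1 e2 = 0"
  by (simp add: simul_def time_def)

locale SpecRel_model =
  fixes d :: nat and Ob IOb Ph :: "'b set" and W :: "'b \<Rightarrow> 'b \<Rightarrow> 'q::linordered_field list \<Rightarrow> bool"
  assumes dim: "3 \<le> d" and SpecRel: "SpecRel d Ob IOb Ph W"
begin

lemma AxEOF: "AxEOF TYPE('q)"
  and AxPh0: "AxPh0 d IOb Ph W"
  and AxEv: "AxEv d IOb W"
  and AxSimDist: "AxSimDist d IOb W"
  using SpecRel by (simp_all add: SpecRel_def)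

lemma photon_iff_lightlike:
  assumes "m \<in> IOb" "length p = d" "length q = d"
  shows "Ph \<inter> ev W m p \<inter> ev W m q \<noteq> {} \<longleftrightarrow> mquad d (vec_of_list p - vec_of_list q) = 0"
proof -
  have "Ph \<inter> ev W m p \<inter> ev W m q \<noteq> {} \<longleftrightarrow> elen (vsub (tl p) (tl q)) = \<bar>hd p - hd q\<bar>"
    using AxPh0 assms unfolding AxPh0_def by blast
  also have "\<dots> \<longleftrightarrow> mquad d (vec_of_list p - vec_of_list q) = 0"
    using assms dim by (auto simp: elen_eq_abs_iff[OF AxEOF] mquad_vec_of_list)
  finally show ?thesis .
qed

lemma ev_nonempty: "m \<in> IOb \<Longrightarrow> length p = d \<Longrightarrow> ev W m p \<noteq> {}"
  using photon_iff_lightlike[of m p p] by auto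

lemma Cd_eq: "m \<in> IOb \<Longrightarrow> Cd d W m = {p. length p = d}"
  using ev_nonempty by (auto simp: Cd_def)

lemma Evm_eq: "m \<in> IOb \<Longrightarrow> Evm d W m = {ev W m p | p. length p = d}"
  using Cd_eq by (auto simp: Evm_def)

lemma ev_inj:
  assumes m: "m \<in> IOb" and "length p = d" "length q = d" and "ev W m p = ev W m q"
  shows "p = q"
proof -
  have "vec_of_list p = vec_of_list q"
  proof (rule eq_if_same_light_cone)
    fix z :: "nat \<Rightarrow> 'q"
    assume z: "z \<in> spacetime d"
    have "z = vec_of_list (list_of_vec d z)"
      using z by (simp add: vec_of_list_of_vec)
    then show "mquad d (vec_of_list p - z) = 0 \<longleftrightarrow> mquad d (vec_of_list q - z) = 0"
      using photon_iff_lightlike[of m p "list_of_vec d z"]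
        photon_iff_lightlike[of m q "list_of_vec d z"]
        assms by simp
  qed (use dim assms in \<open>simp_all add: vec_of_list_spacetime\<close>)
  then show ?thesis
    using assms list_of_vec_of_list by metis
qed

lemma has_crd_ev:
  assumes "m \<in> IOb" "length p = d"
  shows "has_crd d W m (ev W m p)" and "Crd d W m (ev W m p) = p"
proof -
  have unique: "q \<in> Cd d W m \<and> ev W m q = ev W m p \<longleftrightarrow> q = p" for q
    using ev_inj Cd_eq assms by auto
  then show "has_crd d W m (ev W m p)"
    by (simp add: has_crd_def)
  show "Crd d W m (ev W m p) = p"
    unfolding Crd_def unique by simp
qed

lemma interval_ev:
  assumes "m \<in> IOb" "length p = d" "length q = d"
  shows "time d W m (ev W m p) (ev W m q) ^ 2 - dist d W m (ev W m p) (ev W m q) ^ 2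
    = mquad d (vec_of_list p - vec_of_list q)"
  using assms dim
  by (simp add: time_def dist_def has_crd_ev elen_square[OF AxEOF] mquad_vec_of_list)

definition worldview :: "'b \<Rightarrow> 'b \<Rightarrow> 'q list \<Rightarrow> 'q list" where
  "worldview m k p = Crd d W k (ev W m p)"

lemma
  assumes "m \<in> IOb" "k \<in> IOb" "length p = d"
  shows length_worldview: "length (worldview m k p) = d"
    and ev_worldview: "ev W k (worldview m k p) = ev W m p"
proof -
  have "ev W m p \<in> Evm d W k"
    using AxEv assms Evm_eq[of m] unfolding AxEv_def by blast
  then obtain q where "length q = d" "ev W m p = ev W k q"
    using Evm_eq[of k] assms by auto
  then show "length (worldview m k p) = d" "ev W k (worldview m k p) = ev W m p"
    using has_crd_ev[of k q] assms by (simp_all add: worldview_def)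
qed

definition worldview_vec :: "'b \<Rightarrow> 'b \<Rightarrow> (nat \<Rightarrow> 'q) \<Rightarrow> nat \<Rightarrow> 'q" where
  "worldview_vec m k x = vec_of_list (worldview m k (list_of_vec d x))"

lemma worldview_vec_of_list:
  "m \<in> IOb \<Longrightarrow> k \<in> IOb \<Longrightarrow> length p = d \<Longrightarrow>
    worldview_vec m k (vec_of_list p) = vec_of_list (worldview m k p)"
  by (simp add: worldview_vec_def list_of_vec_of_list)

lemma worldview_self: "m \<in> IOb \<Longrightarrow> length p = d \<Longrightarrow> worldview m m p = p"
  by (simp add: worldview_def has_crd_ev)

lemma worldview_vec_self: "m \<in> IOb \<Longrightarrow> x \<in> spacetime d \<Longrightarrow> worldview_vec m m x = x"
  by (simp add: worldview_vec_def worldview_self vec_of_list_of_vec)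

lemma has_crd_worldview:
  assumes "m \<in> IOb" "k \<in> IOb" "length p = d"
  shows "has_crd d W k (ev W m p)" and "Crd d W k (ev W m p) = worldview m k p"
  using has_crd_ev[of k "worldview m k p"] length_worldview[OF assms] ev_worldview[OF assms]
    assms(2)
  by simp_all

lemma time_worldview:
  assumes "m \<in> IOb" "k \<in> IOb" "length p = d" "length q = d"
  shows "time d W k (ev W m p) (ev W m q)
    = \<bar>worldview_vec m k (vec_of_list p) 0 - worldview_vec m k (vec_of_list q) 0\<bar>"
  using assms dim length_worldview[OF assms(1,2)] ev_worldview[OF assms(1,2)]
  by (simp add: time_def has_crd_worldview worldview_vec_of_list hd_eq_vec_of_list
      flip: length_greater_0_conv)

lemma interval_worldview:
  assumes "m \<in> IOb" "k \<in> IOb" "length p = d" "length q = d"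
  shows "time d W k (ev W m p) (ev W m q) ^ 2 - dist d W k (ev W m p) (ev W m q) ^ 2
    = mquad d (worldview_vec m k (vec_of_list p) - worldview_vec m k (vec_of_list q))"
  using interval_ev[of k "worldview m k p" "worldview m k q"] assms
    length_worldview[OF assms(1,2)] ev_worldview[OF assms(1,2)]
  by (simp add: worldview_vec_of_list)

context
  fixes m k
  assumes m: "m \<in> IOb" and k: "k \<in> IOb"
begin

lemma worldview_vec_onto:
  assumes y: "y \<in> spacetime d"
  shows "\<exists>x\<in>spacetime d. worldview_vec m k x = y"
proof -
  have "Evm d W k = Evm d W m"
    using AxEv m k unfolding AxEv_def by blast
  moreover have "ev W k (list_of_vec d y) \<in> Evm d W k"
    using Evm_eq[OF k] by auto
  ultimately obtain p where p: "length p = d" "ev W k (list_of_vec d y) = ev W m p"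
    using Evm_eq[OF m] by auto
  then have "worldview m k p = list_of_vec d y"
    using has_crd_ev[OF k, of "list_of_vec d y"] by (simp add: worldview_def)
  then have "worldview_vec m k (vec_of_list p) = y"
    using worldview_vec_of_list[OF m k p(1)] vec_of_list_of_vec[OF y] by simp
  then show ?thesis
    using vec_of_list_spacetime[OF p(1)] by blast
qed

lemma worldview_vec_lightlike_iff:
  assumes xy: "x \<in> spacetime d" "y \<in> spacetime d"
  shows "mquad d (worldview_vec m k x - worldview_vec m k y) = 0 \<longleftrightarrow> mquad d (x - y) = 0"
proof -
  define p where "p = list_of_vec d x"
  define q where "q = list_of_vec d y"
  have pq: "length p = d" "length q = d" "vec_of_list p = x" "vec_of_list q = y"
    using xy by (simp_all add: p_def q_def vec_of_list_of_vec)
  have "mquad d (x - y) = 0 \<longleftrightarrow> Ph \<inter> ev W m p \<inter> ev W m q \<noteq> {}"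
    using photon_iff_lightlike[OF m pq(1,2)] pq by simp
  also have "\<dots> \<longleftrightarrow> Ph \<inter> ev W k (worldview m k p) \<inter> ev W k (worldview m k q) \<noteq> {}"
    using ev_worldview[OF m k] pq by simp
  also have "\<dots> \<longleftrightarrow> mquad d (vec_of_list (worldview m k p) - vec_of_list (worldview m k q)) = 0"
    using length_worldview[OF m k] pq(1,2) by (intro photon_iff_lightlike[OF k]) simp_all
  also have "vec_of_list (worldview m k p) - vec_of_list (worldview m k q)
      = worldview_vec m k x - worldview_vec m k y"
    by (simp add: worldview_vec_def p_def q_def)
  finally show ?thesis
    by blast
qed

lemma worldview_vec_mquad_simultaneous:
  assumes xy: "x \<in> spacetime d" "y \<in> spacetime d"
    and simultaneous: "x 0 = y 0" "worldview_vec m k x 0 = worldview_vec m k y 0"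
  shows "mquad d (worldview_vec m k x - worldview_vec m k y) = mquad d (x - y)"
proof -
  define p where "p = list_of_vec d x"
  define q where "q = list_of_vec d y"
  have pq: "length p = d" "length q = d" "vec_of_list p = x" "vec_of_list q = y"
    using xy by (simp_all add: p_def q_def vec_of_list_of_vec)
  have times: "time d W m (ev W m p) (ev W m q) = 0" "time d W k (ev W m p) (ev W m q) = 0"
    using time_worldview[OF m m pq(1,2)] time_worldview[OF m k pq(1,2)] simultaneous pq
    by (simp_all add: worldview_vec_self m xy)
  have "ev W m p \<in> Evm d W m" "ev W m q \<in> Evm d W m"
    using Evm_eq[OF m] pq by auto
  moreover have "has_crd d W m (ev W m p) \<and> has_crd d W m (ev W m q)
      \<and> has_crd d W k (ev W m p) \<and> has_crd d W k (ev W m q)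
      \<and> simul d W m (ev W m p) (ev W m q) \<and> simul d W k (ev W m p) (ev W m q)"
    using times has_crd_worldview[OF m m] has_crd_worldview[OF m k] pq(1,2)
    by (simp add: simul_iff_time_eq_0)
  ultimately have "dist d W m (ev W m p) (ev W m q) = dist d W k (ev W m p) (ev W m q)"
    using AxSimDist m k unfolding AxSimDist_def by blast
  then show ?thesis
    using interval_worldview[OF m m pq(1,2)] interval_worldview[OF m k pq(1,2)] times pq
    by (simp add: worldview_vec_self m xy)
qed

lemma worldview_transformation_worldview_vec: "worldview_transformation d (worldview_vec m k)"
proof
  show "worldview_vec m k x \<in> spacetime d" for x
    using length_worldview[OF m k] by (simp add: worldview_vec_def vec_of_list_spacetime)
qed (simp_all add: dim worldview_vec_onto worldview_vec_lightlike_iff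
    worldview_vec_mquad_simultaneous)

end

theorem interval_invariant:
  assumes m: "m \<in> IOb" and k: "k \<in> IOb" and "e1 \<in> Evm d W m" "e2 \<in> Evm d W m"
  shows "has_crd d W m e1 \<and> has_crd d W m e2 \<and> has_crd d W k e1 \<and> has_crd d W k e2 \<and>
    time d W m e1 e2 ^ 2 - dist d W m e1 e2 ^ 2 = time d W k e1 e2 ^ 2 - dist d W k e1 e2 ^ 2"
proof -
  obtain p q where pq: "length p = d" "length q = d" "e1 = ev W m p" "e2 = ev W m q"
    using assms Evm_eq[OF m] by auto
  interpret worldview_transformation d "worldview_vec m k"
    by (rule worldview_transformation_worldview_vec[OF m k])
  have "time d W m e1 e2 ^ 2 - dist d W m e1 e2 ^ 2 = mquad d (vec_of_list p - vec_of_list q)"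
    using interval_worldview[OF m m pq(1,2)] pq
    by (simp add: worldview_vec_self m vec_of_list_spacetime)
  also have "\<dots> = mquad d (worldview_vec m k (vec_of_list p) - worldview_vec m k (vec_of_list q))"
    using pq by (simp add: mquad_preserved vec_of_list_spacetime)
  also have "\<dots> = time d W k e1 e2 ^ 2 - dist d W k e1 e2 ^ 2"
    using interval_worldview[OF m k pq(1,2)] pq by simp
  finally show ?thesis
    using has_crd_worldview[OF m m] has_crd_worldview[OF m k] pq by simp
qed

end

theorem mainTheorem1:
  fixes d :: nat and Ob IOb Ph :: "'b set" and W :: "'b \<Rightarrow> 'b \<Rightarrow> 'q::linordered_field list \<Rightarrow> bool"
  assumes "3 \<le> d" and "SpecRel d Ob IOb Ph W"
  shows "\<forall>m\<in>IOb. \<forall>k\<in>IOb. \<forall>e1\<in>Evm d W m. \<forall>e2\<in>Evm d W m.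
           has_crd d W m e1 \<and> has_crd d W m e2 \<and> has_crd d W k e1 \<and> has_crd d W k e2 \<and>
           (time d W m e1 e2)^2 - (dist d W m e1 e2)^2 = (time d W k e1 e2)^2 - (dist d W k e1 e2)^2"
proof -
  interpret SpecRel_model d Ob IOb Ph W
    using assms by unfold_locales
  show ?thesis
    using interval_invariant by blast
qed

end
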